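(* Let $V$ be the abelian group (written additively) with generators $u_{a,b}$ for real numbers $0<b<a\le1$, subject to the relations: (1) $u_{a+a',b}=u_{a,b}+u_{a',b}$ whenever $0<b<\min(a,a')$ and $a+a'\le1$; (2) $u_{a,b+b'}=u_{a,b}+u_{a,b'}$ whenever $0<\min(b,b')$ and $b+b'<a\le1$; (3) $2u_{a,b}+u_{2b,a}=0$ whenever $0<b<a<2b\le1$. Then the assignment $u_{a,b}\mapsto a\wedge b$ induces a group isomorphism $V\to\bigwedge^2_{\mathbb{Q}}\mathbb{R}$.
   Context: $\bigwedge^2_{\mathbb{Q}}\mathbb{R}$ is the second exterior power of $\mathbb{R}$ viewed as a $\mathbb{Q}$-vector space. *)

theory Defs
  imports "HOL-Algebra.Free_Abelian_Groups" Complex_Main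
begin

definition presented_ab_group :: "'a set \<Rightarrow> ('a \<Rightarrow>\<^sub>0 int) set \<Rightarrow> ('a \<Rightarrow>\<^sub>0 int) set monoid" where
  "presented_ab_group S R = free_Abelian_group S Mod generate (free_Abelian_group S) R"

definition pclass :: "'a set \<Rightarrow> ('a \<Rightarrow>\<^sub>0 int) set \<Rightarrow> ('a \<Rightarrow>\<^sub>0 int) \<Rightarrow> ('a \<Rightarrow>\<^sub>0 int) set" where
  "pclass S R x = r_coset (free_Abelian_group S) (generate (free_Abelian_group S) R) x"

definition V_gens :: "(real \<times> real) set" where
  "V_gens = {(a, b). 0 < b \<and> b < a \<and> a \<le> 1}"

definition V_rels :: "(real \<times> real \<Rightarrow>\<^sub>0 int) set" where
  "V_rels =
     {frag_of (a + a', b) - frag_of (a, b) - frag_of (a', b) | a a' b.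
        0 < b \<and> b < min a a' \<and> a + a' \<le> 1}
   \<union> {frag_of (a, b + b') - frag_of (a, b) - frag_of (a, b') | a b b'.
        0 < min b b' \<and> b + b' < a \<and> a \<le> 1}
   \<union> {frag_cmul 2 (frag_of (a, b)) + frag_of (2 * b, a) | a b.
        0 < b \<and> b < a \<and> a < 2 * b \<and> 2 * b \<le> 1}"

definition V_group :: "(real \<times> real \<Rightarrow>\<^sub>0 int) set monoid" where
  "V_group = presented_ab_group V_gens V_rels"

(* The second exterior power of R over Q, as an abelian group: generated by symbols x \<wedge> y
   (x, y real) subject to Q-bilinearity and alternation. *)
definition wedge_rels :: "(real \<times> real \<Rightarrow>\<^sub>0 int) set" where
  "wedge_rels =
     {frag_of (x + x', y) - frag_of (x, y) - frag_of (x', y) | x x' y. True}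
   \<union> {frag_of (x, y + y') - frag_of (x, y) - frag_of (x, y') | x y y'. True}
   \<union> {frag_cmul (int n) (frag_of (of_rat (of_int m / of_nat n) * x, y)) - frag_cmul m (frag_of (x, y))
        | m n x y. n \<noteq> 0}
   \<union> {frag_cmul (int n) (frag_of (x, of_rat (of_int m / of_nat n) * y)) - frag_cmul m (frag_of (x, y))
        | m n x y. n \<noteq> 0}
   \<union> {frag_of (x, x) | x. True}"

definition Wedge2_QR :: "(real \<times> real \<Rightarrow>\<^sub>0 int) set monoid" where
  "Wedge2_QR = presented_ab_group UNIV wedge_rels"

definition wedge :: "real \<Rightarrow> real \<Rightarrow> (real \<times> real \<Rightarrow>\<^sub>0 int) set" where
  "wedge x y = pclass UNIV wedge_rels (frag_of (x, y))"

definition u_gen :: "real \<Rightarrow> real \<Rightarrow> (real \<times> real \<Rightarrow>\<^sub>0 int) set" where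
  "u_gen a b = pclass V_gens V_rels (frag_of (a, b))"

end

theory Submission
  imports Defs "HOL-Library.Function_Algebras"
begin

(* Relations (1) and (2) say that u is additive in each variable on the triangle 0 < b < a \<le> 1.
   An additive function on an interval extends uniquely to an additive function on \<real>, so u
   extends uniquely to a biadditive map W on \<real> \<times> \<real>. Relation (3) says that
   2 (W a b + W b a) vanishes on an open set, hence everywhere, which makes W alternating.
   Conversely, biadditive maps on \<real> \<times> \<real> are automatically \<rat>-bilinear, so the alternating
   biadditive maps on \<real> \<times> \<real> are exactly the homomorphisms out of \<Lambda>\<^sup>2\<^sub>\<rat> \<real>. Thus V and
   \<Lambda>\<^sup>2\<^sub>\<rat> \<real> have the same universal property, and u a b \<mapsto> a \<wedge> b, x \<wedge> y \<mapsto> W x y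
   are inverse homomorphisms. *)

section \<open>Additive functions on the reals\<close>

lemma additive_diff_fun:
  "additive f \<Longrightarrow> additive g \<Longrightarrow> additive (\<lambda>x. f x - g x)"
  unfolding additive_def by (simp add: algebra_simps)

lemma additive_comp: "additive f \<Longrightarrow> additive g \<Longrightarrow> additive (\<lambda>x. f (g x))"
  unfolding additive_def by simp

lemma additive_id: "additive (\<lambda>x. x)"
  by unfold_locales simp

lemma additive_of_nat_mult:
  fixes F :: "real \<Rightarrow> 'a::ab_group_add"
  assumes "additive F"
  shows "F (of_nat n * x) = (\<Sum>_<n. F x)"
proof (induction n)
  case (Suc n)
  have "F (of_nat (Suc n) * x) = F x + F (of_nat n * x)"
    by (simp add: distrib_right additive.add[OF assms])
  with Suc show ?case by simp
qed (simp add: additive.zero[OF assms])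

lemma additive_int_eqI:
  fixes f g :: "int \<Rightarrow> 'a::ab_group_add"
  assumes f: "additive f" and g: "additive g" and one: "f 1 = g 1"
  shows "f k = g k"
proof (induction k rule: int_induct[of _ 0])
  case base
  show ?case by (simp add: additive.zero[OF f] additive.zero[OF g])
next
  case (step1 i)
  then show ?case by (simp add: additive.add[OF f] additive.add[OF g] one)
next
  case (step2 i)
  then show ?case by (simp add: additive.diff[OF f] additive.diff[OF g] one)
qed

lemma additive_zero_if_zero_on_interval:
  fixes F :: "real \<Rightarrow> 'a::ab_group_add"
  assumes F: "additive F" and "p < q" and zero: "\<And>x. p < x \<Longrightarrow> x < q \<Longrightarrow> F x = 0"
  shows "F y = 0"
proof -
  have pos: "F z = 0" if "0 < z" "z < q - p" for z
  proof -
    define c where "c = p + (q - p - z) / 2"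
    have "F (c + z) = F c + F z" by (rule additive.add[OF F])
    moreover have "F (c + z) = 0" "F c = 0"
      using that by (auto intro!: zero simp: c_def field_simps)
    ultimately show ?thesis by simp
  qed
  have small: "F z = 0" if "\<bar>z\<bar> < q - p" for z
    using pos[of z] pos[of "- z"] that additive.zero[OF F] additive.minus[OF F, of z]
    by (cases z "0 :: real" rule: linorder_cases) auto
  obtain n where n: "\<bar>y\<bar> < real n * (q - p)"
    using reals_Archimedean3[of "q - p"] \<open>p < q\<close> by auto
  then have "n > 0" by (cases "n = 0") auto
  have "F y = F (of_nat n * (y / n))" using \<open>n > 0\<close> by simp
  also have "\<dots> = (\<Sum>_<n. F (y / n))" by (rule additive_of_nat_mult[OF F])
  also have "F (y / n) = 0"
    using n \<open>n > 0\<close> by (intro small) (simp add: abs_divide divide_less_eq mult.commute)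
  finally show ?thesis by simp
qed

lemma additive_eq_if_eq_on_interval:
  fixes F G :: "real \<Rightarrow> 'a::ab_group_add"
  assumes "additive F" "additive G" "p < q" "\<And>x. p < x \<Longrightarrow> x < q \<Longrightarrow> F x = G x"
  shows "F y = G y"
  using additive_zero_if_zero_on_interval[OF additive_diff_fun[OF assms(1,2)] assms(3)] assms(4)
  by simp

lemma additive_on_interval_of_nat_mult:
  fixes f :: "real \<Rightarrow> 'a::ab_group_add"
  assumes f: "\<And>x y. 0 < x \<Longrightarrow> 0 < y \<Longrightarrow> x + y < c \<Longrightarrow> f (x + y) = f x + f y"
    and "0 < t" "0 < n" "of_nat n * t < c"
  shows "f (of_nat n * t) = (\<Sum>_<n. f t)"
  using assms(3,4)
proof (induction n)
  case (Suc n)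
  show ?case
  proof (cases "n = 0")
    case False
    have "0 < of_nat n * t" "of_nat n * t + t < c"
      using Suc.prems False \<open>0 < t\<close> by (auto simp: algebra_simps)
    then have "f (of_nat n * t + t) = f (of_nat n * t) + f t"
      using \<open>0 < t\<close> by (intro f)
    moreover have "f (of_nat n * t) = (\<Sum>_<n. f t)"
      using Suc.IH False \<open>of_nat n * t + t < c\<close> \<open>0 < t\<close> by simp
    ultimately show ?thesis by (simp add: algebra_simps)
  qed simp
qed simp

lemma additive_extension_to_positive:
  fixes f :: "real \<Rightarrow> 'a::ab_group_add"
  assumes "0 < c" and f: "\<And>x y. 0 < x \<Longrightarrow> 0 < y \<Longrightarrow> x + y < c \<Longrightarrow> f (x + y) = f x + f y"
  obtains P where "\<And>x y. 0 < x \<Longrightarrow> 0 < y \<Longrightarrow> P (x + y) = P x + P y"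
    and "\<And>x. 0 < x \<Longrightarrow> x < c \<Longrightarrow> P x = f x"
proof -
  have sums_agree: "(\<Sum>_<n. f (x / n)) = (\<Sum>_<m. f (x / m))"
    if "0 < x" "0 < n" "0 < m" "x / n < c" "x / m < c" for x :: real and n m :: nat
  proof -
    define t where "t = x / (n * m)"
    have "x / n = of_nat m * t" "x / m = of_nat n * t" "0 < t"
      using that by (auto simp: t_def)
    with that have "f (x / n) = (\<Sum>_<m. f t)" "f (x / m) = (\<Sum>_<n. f t)"
      by (simp_all add: additive_on_interval_of_nat_mult[OF f])
    then show ?thesis by (simp add: sum.swap[of _ "{..<n}" "{..<m}"])
  qed
  have "\<exists>n. 0 < n \<and> x / real n < c" if "0 < x" for x
  proof -
    obtain n where "x < real n * c" using reals_Archimedean3[OF \<open>0 < c\<close>] by blast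
    moreover from this that \<open>0 < c\<close> have "0 < n" by (cases n) auto
    ultimately show ?thesis using \<open>0 < c\<close> by (auto simp: divide_less_eq mult.commute)
  qed
  then obtain N where N: "\<And>x. 0 < x \<Longrightarrow> 0 < N x \<and> x / real (N x) < c" by metis
  define P where "P x = (\<Sum>_<N x. f (x / N x))" for x
  have P: "P x = (\<Sum>_<n. f (x / n))" if "0 < x" "0 < n" "x / n < c" for x :: real and n :: nat
    unfolding P_def using sums_agree N[of x] that by blast
  show thesis
  proof
    fix x y :: real
    assume "0 < x" "0 < y"
    define n where "n = N (x + y)"
    have "0 < n" and xy: "(x + y) / n < c" using N[of "x + y"] \<open>0 < x\<close> \<open>0 < y\<close> by (auto simp: n_def)
    moreover have "0 < x / n" "0 < y / n" using \<open>0 < x\<close> \<open>0 < y\<close> \<open>0 < n\<close> by auto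
    ultimately have "f (x / n + y / n) = f (x / n) + f (y / n)" "x / n < c" "y / n < c"
      by (auto intro: f simp: add_divide_distrib)
    then show "P (x + y) = P x + P y"
      using P[of "x + y" n] P[of x n] P[of y n] xy \<open>0 < x\<close> \<open>0 < y\<close> \<open>0 < n\<close>
      by (simp add: add_divide_distrib sum.distrib)
  next
    fix x :: real
    assume "0 < x" "x < c"
    then show "P x = f x" using P[of x 1] by simp
  qed
qed

lemma additive_extension_from_positive:
  fixes P :: "real \<Rightarrow> 'a::ab_group_add"
  assumes P: "\<And>x y. 0 < x \<Longrightarrow> 0 < y \<Longrightarrow> P (x + y) = P x + P y"
  obtains F where "additive F" and "\<And>x. 0 < x \<Longrightarrow> F x = P x"
proof
  define F where "F x = P (x + (\<bar>x\<bar> + 1)) - P (\<bar>x\<bar> + 1)" for x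
  have F: "F x = P (x + M) - P M" if "0 < x + M" "0 < M" for x M
  proof -
    have "P (x + (\<bar>x\<bar> + 1) + M) = P ((x + M) + (\<bar>x\<bar> + 1))" by (simp add: algebra_simps)
    then show ?thesis using that P[of "x + (\<bar>x\<bar> + 1)" M] P[of "x + M" "\<bar>x\<bar> + 1"]
      by (simp add: F_def algebra_simps)
  qed
  show "additive F"
  proof
    fix x y :: real
    define M where "M = \<bar>x\<bar> + \<bar>y\<bar> + 1"
    have "F (x + y) = P ((x + M) + (y + M)) - P (M + M)"
      by (rule F[of "x + y" "M + M", THEN trans]) (auto simp: M_def algebra_simps)
    also have "\<dots> = (P (x + M) - P M) + (P (y + M) - P M)"
      using P[of "x + M" "y + M"] P[of M M] by (simp add: M_def)
    also have "\<dots> = F x + F y" using F[of x M] F[of y M] by (simp add: M_def)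
    finally show "F (x + y) = F x + F y" .
  qed
  show "F x = P x" if "0 < x" for x
    using F[of x 1] P[of x 1] that by simp
qed

lemma additive_extension_from_interval:
  fixes f :: "real \<Rightarrow> 'a::ab_group_add"
  assumes "0 < c" and "\<And>x y. 0 < x \<Longrightarrow> 0 < y \<Longrightarrow> x + y < c \<Longrightarrow> f (x + y) = f x + f y"
  obtains F where "additive F" and "\<And>x. 0 < x \<Longrightarrow> x < c \<Longrightarrow> F x = f x"
proof -
  obtain P where "\<And>x y. 0 < x \<Longrightarrow> 0 < y \<Longrightarrow> P (x + y) = P x + P y"
    and "\<And>x. 0 < x \<Longrightarrow> x < c \<Longrightarrow> P x = f x"
    using additive_extension_to_positive[OF assms] by metis
  with additive_extension_from_positive[of P] that show thesis by metis
qed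

lemma additive_extension_from_closed_interval:
  fixes f :: "real \<Rightarrow> 'a::ab_group_add"
  assumes "0 < c" and f: "\<And>x y. 0 < x \<Longrightarrow> 0 < y \<Longrightarrow> x + y \<le> c \<Longrightarrow> f (x + y) = f x + f y"
  obtains F where "additive F" and "\<And>x. 0 < x \<Longrightarrow> x \<le> c \<Longrightarrow> F x = f x"
proof -
  have "f (x + y) = f x + f y" if "0 < x" "0 < y" "x + y < c" for x y
    using f that by simp
  then obtain F where F: "additive F" and Ff: "\<And>x. 0 < x \<Longrightarrow> x < c \<Longrightarrow> F x = f x"
    using additive_extension_from_interval[OF \<open>0 < c\<close>] by blast
  have "F c = F (c / 2) + F (c / 2)" using additive.add[OF F, of "c / 2" "c / 2"] by simp
  also have "\<dots> = f c" using f[of "c / 2" "c / 2"] Ff[of "c / 2"] \<open>0 < c\<close> by simp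
  finally have "F c = f c" .
  with F Ff that show thesis by (metis order_le_less)
qed

section \<open>Biadditive maps\<close>

definition biadditive :: "('a::ab_group_add \<Rightarrow> 'b::ab_group_add \<Rightarrow> 'c::ab_group_add) \<Rightarrow> bool" where
  "biadditive B \<longleftrightarrow> (\<forall>y. additive (\<lambda>x. B x y)) \<and> (\<forall>x. additive (B x))"

lemma biadditiveI:
  assumes "\<And>x x' y. B (x + x') y = B x y + B x' y" and "\<And>x y y'. B x (y + y') = B x y + B x y'"
  shows "biadditive B"
  using assms unfolding biadditive_def additive_def by blast

lemma biadditive_add_left: "biadditive B \<Longrightarrow> B (x + x') y = B x y + B x' y"
  and biadditive_add_right: "biadditive B \<Longrightarrow> B x (y + y') = B x y + B x y'"
  unfolding biadditive_def additive_def by blast+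

lemma biadditive_additive_left: "biadditive B \<Longrightarrow> additive (\<lambda>x. B x y)"
  and biadditive_additive_right: "biadditive B \<Longrightarrow> additive (B x)"
  unfolding biadditive_def by blast+

lemma biadditive_comp: "additive f \<Longrightarrow> biadditive B \<Longrightarrow> biadditive (\<lambda>x y. f (B x y))"
  by (rule biadditiveI) (simp_all add: additive.add biadditive_add_left biadditive_add_right)

lemma biadditive_diff: "biadditive B \<Longrightarrow> biadditive C \<Longrightarrow> biadditive (\<lambda>x y. B x y - C x y)"
  by (rule biadditiveI) (simp_all add: biadditive_add_left biadditive_add_right algebra_simps)

lemma biadditive_antisym:
  assumes "biadditive B" and "\<And>x. B x x = 0"
  shows "B y x = - B x y"
proof -
  have "0 = B (x + y) (x + y)" using assms(2) by simp
  also have "\<dots> = B x x + B x y + (B y x + B y y)"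
    using assms(1) by (simp add: biadditive_add_left biadditive_add_right)
  finally show ?thesis using assms(2) by (simp add: add_eq_0_iff add.commute)
qed

lemma biadditive_zero_if_zero_on_rectangle:
  fixes B :: "real \<Rightarrow> real \<Rightarrow> 'a::ab_group_add"
  assumes B: "biadditive B" and "p < q" "p' < q'"
    and zero: "\<And>a b. p < a \<Longrightarrow> a < q \<Longrightarrow> p' < b \<Longrightarrow> b < q' \<Longrightarrow> B a b = 0"
  shows "B x y = 0"
proof (rule additive_zero_if_zero_on_interval[OF biadditive_additive_left[OF B] \<open>p < q\<close>])
  fix a assume "p < a" "a < q"
  then show "B a y = 0"
    using additive_zero_if_zero_on_interval[OF biadditive_additive_right[OF B] \<open>p' < q'\<close>] zero
    by blast
qed

lemma biadditive_if_additive_rows: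
  fixes G :: "real \<Rightarrow> real \<Rightarrow> 'a::ab_group_add"
  assumes G: "additive G" and "p < q" and rows: "\<And>a. p < a \<Longrightarrow> a < q \<Longrightarrow> additive (G a)"
  shows "biadditive G"
proof (rule biadditiveI)
  show G_add: "G (x + x') y = G x y + G x' y" for x x' y
    by (simp add: additive.add[OF G])
  fix x y y'
  have "G x (y + y') - G x y - G x y' = 0"
  proof (rule additive_zero_if_zero_on_interval[of "\<lambda>x. G x (y + y') - G x y - G x y'" p q])
    show "additive (\<lambda>x. G x (y + y') - G x y - G x y')"
      unfolding additive_def by (simp add: G_add algebra_simps)
  qed (simp_all add: \<open>p < q\<close> additive.add[OF rows])
  then show "G x (y + y') = G x y + G x y'" by (simp add: algebra_simps)
qed

lemma biadditive_extension_from_triangle: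
  fixes u :: "real \<Rightarrow> real \<Rightarrow> 'a::ab_group_add"
  assumes left: "\<And>a a' b. 0 < b \<Longrightarrow> b < min a a' \<Longrightarrow> a + a' \<le> 1 \<Longrightarrow> u (a + a') b = u a b + u a' b"
    and right: "\<And>a b b'. 0 < min b b' \<Longrightarrow> b + b' < a \<Longrightarrow> a \<le> 1 \<Longrightarrow> u a (b + b') = u a b + u a b'"
  obtains W where "biadditive W" and "\<And>a b. 0 < b \<Longrightarrow> b < a \<Longrightarrow> a \<le> 1 \<Longrightarrow> W a b = u a b"
proof -
  have ex: "\<exists>g. additive g \<and> (\<forall>b. 0 < b \<and> b < a \<longrightarrow> g b = u a b)" if "0 < a" "a \<le> 1" for a
  proof -
    have "u a (b + b') = u a b + u a b'" if "0 < b" "0 < b'" "b + b' < a" for b b'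
      using right that \<open>a \<le> 1\<close> by simp
    then obtain F where "additive F" "\<And>b. 0 < b \<Longrightarrow> b < a \<Longrightarrow> F b = u a b"
      using additive_extension_from_interval[OF \<open>0 < a\<close>] by blast
    then show ?thesis by blast
  qed
  define g where "g a = (SOME g. additive g \<and> (\<forall>b. 0 < b \<and> b < a \<longrightarrow> g b = u a b))" for a
  have "additive (g a) \<and> (\<forall>b. 0 < b \<and> b < a \<longrightarrow> g a b = u a b)" if "0 < a" "a \<le> 1" for a
    unfolding g_def using ex[OF that] by (rule someI_ex)
  then have g: "\<And>a. 0 < a \<Longrightarrow> a \<le> 1 \<Longrightarrow> additive (g a)"
    and g_u: "\<And>a b. 0 < b \<Longrightarrow> b < a \<Longrightarrow> a \<le> 1 \<Longrightarrow> g a b = u a b"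
    by auto
  have "g (a + a') = g a + g a'" if "0 < a" "0 < a'" "a + a' \<le> 1" for a a'
  proof
    fix b
    have "g (a + a') b - g a b = g a' b"
    proof (rule additive_eq_if_eq_on_interval[of "\<lambda>b. g (a + a') b - g a b" "g a'" 0 "min a a'"])
      show "additive (\<lambda>b. g (a + a') b - g a b)" "additive (g a')"
        using that by (auto intro!: additive_diff_fun g)
      fix x assume "0 < x" "x < min a a'"
      with that show "g (a + a') x - g a x = g a' x"
        using left[of x a a'] g_u[of x "a + a'"] g_u[of x a] g_u[of x a'] by simp
    qed (use that in simp)
    then show "g (a + a') b = (g a + g a') b" by (simp add: algebra_simps)
  qed
  then obtain G where G: "additive G" and G_g: "\<And>a. 0 < a \<Longrightarrow> a \<le> 1 \<Longrightarrow> G a = g a"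
    using additive_extension_from_closed_interval[of 1 g] by auto
  have "biadditive G"
    by (rule biadditive_if_additive_rows[OF G zero_less_one]) (simp add: G_g g)
  moreover have "G a b = u a b" if "0 < b" "b < a" "a \<le> 1" for a b
    using that by (simp add: G_g g_u)
  ultimately show thesis using that by blast
qed

lemma biadditive_alternating_if_doubling_relation:
  fixes W :: "real \<Rightarrow> real \<Rightarrow> 'a::ab_group_add"
  assumes W: "biadditive W"
    and double: "\<And>a b. 0 < b \<Longrightarrow> b < a \<Longrightarrow> a < 2 * b \<Longrightarrow> 2 * b \<le> 1 \<Longrightarrow> W a b + W a b + W (2 * b) a = 0"
  shows "W x x = 0"
proof -
  define T where "T x y = (W x y + W y x) + (W x y + W y x)" for x y
  have T: "biadditive T"
    unfolding T_def biadditive_def additive_def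
    by (simp add: biadditive_add_left[OF W] biadditive_add_right[OF W] add_ac)
  \<comment> \<open>The rectangle lies in the domain 0 < b < a < 2b \<le> 1 of the doubling relation.\<close>
  have T_zero: "T a b = 0" if "3/8 < a" "a < 1/2" "1/4 < b" "b < 3/8" for a b
  proof -
    have "W (2 * b) a = W b a + W b a"
      unfolding mult_2 by (rule biadditive_add_left[OF W])
    then have "T a b = W a b + W a b + W (2 * b) a" by (simp add: T_def add_ac)
    also have "\<dots> = 0" using double that by simp
    finally show ?thesis .
  qed
  have "T (x / 2) (x / 2) = 0"
    by (rule biadditive_zero_if_zero_on_rectangle[of T "3/8" "1/2" "1/4" "3/8", OF T _ _ T_zero]) simp_all
  moreover have "W (x / 2 + x / 2) (x / 2 + x / 2) = T (x / 2) (x / 2)"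
    unfolding T_def biadditive_add_left[OF W] biadditive_add_right[OF W] by (simp only: add_ac)
  ultimately show ?thesis by simp
qed

section \<open>Presented abelian groups\<close>

lemma keys_add_subset: "Poly_Mapping.keys x \<subseteq> S \<Longrightarrow> Poly_Mapping.keys y \<subseteq> S \<Longrightarrow> Poly_Mapping.keys (x + y) \<subseteq> S"
  and keys_diff_subset: "Poly_Mapping.keys x \<subseteq> S \<Longrightarrow> Poly_Mapping.keys y \<subseteq> S \<Longrightarrow> Poly_Mapping.keys (x - y) \<subseteq> S"
  and keys_cmul_subset: "Poly_Mapping.keys x \<subseteq> S \<Longrightarrow> Poly_Mapping.keys (frag_cmul k x) \<subseteq> S"
  using keys_add[of x y] keys_diff[of x y] keys_cmul[of k x] by auto

lemma frag_cmul_double: "frag_cmul 2 x = x + x"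
  using frag_cmul_distrib[of 1 1 x] by simp

lemma subgroup_generate_free_Abelian_group:
  "R \<subseteq> carrier (free_Abelian_group S) \<Longrightarrow> subgroup (generate (free_Abelian_group S) R) (free_Abelian_group S)"
  by (rule group.generate_is_subgroup[OF group_free_Abelian_group])

lemma comm_group_presented_ab_group:
  "R \<subseteq> carrier (free_Abelian_group S) \<Longrightarrow> comm_group (presented_ab_group S R)"
  unfolding presented_ab_group_def
  by (rule comm_group.abelian_FactGroup[OF abelian_free_Abelian_group subgroup_generate_free_Abelian_group])

lemma carrier_presented_ab_group:
  "carrier (presented_ab_group S R) = pclass S R ` carrier (free_Abelian_group S)"
  unfolding presented_ab_group_def pclass_def by (rule carrier_FactGroup)

lemma pclass_mult:
  assumes "R \<subseteq> carrier (free_Abelian_group S)" "Poly_Mapping.keys x \<subseteq> S" "Poly_Mapping.keys y \<subseteq> S"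
  shows "pclass S R x \<otimes>\<^bsub>presented_ab_group S R\<^esub> pclass S R y = pclass S R (x + y)"
proof -
  interpret normal "generate (free_Abelian_group S) R" "free_Abelian_group S"
    using comm_group.subgroup_imp_normal[OF abelian_free_Abelian_group
        subgroup_generate_free_Abelian_group[OF assms(1)]] .
  show ?thesis
    unfolding presented_ab_group_def pclass_def mult_FactGroup using rcos_sum assms(2,3) by simp
qed

lemma pclass_eq_one_iff:
  assumes "R \<subseteq> carrier (free_Abelian_group S)" "Poly_Mapping.keys x \<subseteq> S"
  shows "pclass S R x = \<one>\<^bsub>presented_ab_group S R\<^esub> \<longleftrightarrow> x \<in> generate (free_Abelian_group S) R"
proof -
  interpret subgroup "generate (free_Abelian_group S) R" "free_Abelian_group S"
    by (rule subgroup_generate_free_Abelian_group[OF assms(1)])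
  show ?thesis
    unfolding presented_ab_group_def pclass_def one_FactGroup
    using group.rcos_self[OF group_free_Abelian_group _ is_subgroup] rcos_const[OF group_free_Abelian_group]
      assms(2) by force
qed

lemma additive_zero_on_generate:
  fixes \<Psi> :: "('c \<Rightarrow>\<^sub>0 int) \<Rightarrow> 'b::ab_group_add"
  assumes "additive \<Psi>" "R \<subseteq> carrier (free_Abelian_group S)" "\<And>r. r \<in> R \<Longrightarrow> \<Psi> r = 0"
    and "x \<in> generate (free_Abelian_group S) R"
  shows "\<Psi> x = 0"
  using assms(4)
proof (induction x rule: generate.induct)
  case (inv r)
  then have "inv\<^bsub>free_Abelian_group S\<^esub> r = - r" using assms(2) by auto
  with inv show ?case by (simp add: assms(3) additive.minus[OF assms(1)])
qed (simp_all add: assms additive.zero additive.add)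

lemma additive_frag_extension:
  fixes f :: "'c \<Rightarrow> 'b::ab_group_add"
  obtains \<Psi> where "additive \<Psi>" and "\<And>p. \<Psi> (frag_of p) = f p"
proof -
  define G where "G = (\<lparr>carrier = UNIV, monoid.mult = (+), one = 0\<rparr> :: 'b monoid)"
  have "comm_group G"
    unfolding G_def by (rule comm_groupI) (auto simp: algebra_simps intro: exI[of _ "- x" for x])
  then obtain \<Psi> where "\<Psi> \<in> hom (free_Abelian_group UNIV) G" "\<And>p. \<Psi> (frag_of p) = f p"
    using comm_group.free_Abelian_group_universal[of G f UNIV] by (auto simp: G_def)
  moreover from this have "additive \<Psi>"
    by unfold_locales (metis G_def UNIV_I carrier_free_Abelian_group_iff hom_mult
        monoid.select_convs(1) mult_free_Abelian_group subset_UNIV)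
  ultimately show thesis using that by blast
qed

lemma additive_frag_cmul_frag_of:
  fixes B :: "real \<Rightarrow> real \<Rightarrow> 'a::ab_group_add"
  assumes B: "biadditive B" and \<Psi>: "additive \<Psi>" and gen: "\<And>x y. \<Psi> (frag_of (x, y)) = B x y"
  shows "\<Psi> (frag_cmul k (frag_of (x, y))) = B (of_int k * x) y"
    and "\<Psi> (frag_cmul k (frag_of (x, y))) = B x (of_int k * y)"
proof -
  have \<Psi>_k: "additive (\<lambda>k. \<Psi> (frag_cmul k (frag_of (x, y))))"
    by unfold_locales (simp add: frag_cmul_distrib additive.add[OF \<Psi>])
  have left: "additive (\<lambda>k. B (of_int k * x) y)" and right: "additive (\<lambda>k. B x (of_int k * y))"
    by unfold_locales (simp_all add: distrib_right biadditive_add_left[OF B] biadditive_add_right[OF B])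
  show "\<Psi> (frag_cmul k (frag_of (x, y))) = B (of_int k * x) y"
    using additive_int_eqI[OF \<Psi>_k left] gen by simp
  show "\<Psi> (frag_cmul k (frag_of (x, y))) = B x (of_int k * y)"
    using additive_int_eqI[OF \<Psi>_k right] gen by simp
qed

(* The carrier of a presented abelian group, made into a type of class ab_group_add, so that
   additive maps out of it are available with the type-class library. *)
locale presented_ab_group_type =
  fixes S :: "'c set" and R :: "('c \<Rightarrow>\<^sub>0 int) set"
    and Rep :: "'v::ab_group_add \<Rightarrow> ('c \<Rightarrow>\<^sub>0 int) set" and Abs :: "('c \<Rightarrow>\<^sub>0 int) set \<Rightarrow> 'v"
  assumes relators_in_carrier: "R \<subseteq> carrier (free_Abelian_group S)"
    and type_definition: "type_definition Rep Abs (carrier (presented_ab_group S R))"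
    and Rep_add: "Rep (x + y) = Rep x \<otimes>\<^bsub>presented_ab_group S R\<^esub> Rep y"
begin

interpretation G: comm_group "presented_ab_group S R"
  by (rule comm_group_presented_ab_group[OF relators_in_carrier])

lemma Rep_in_carrier: "Rep v \<in> carrier (presented_ab_group S R)"
  using type_definition.Rep[OF type_definition] .

lemma Rep_inject: "Rep v = Rep w \<longleftrightarrow> v = w"
  using type_definition.Rep_inject[OF type_definition] .

lemma Rep_zero: "Rep 0 = \<one>\<^bsub>presented_ab_group S R\<^esub>"
  using Rep_add[of 0 0] G.l_cancel_one'[OF Rep_in_carrier Rep_in_carrier] by simp

lemma Abs_mult:
  "X \<in> carrier (presented_ab_group S R) \<Longrightarrow> Y \<in> carrier (presented_ab_group S R) \<Longrightarrow>
    Abs (X \<otimes>\<^bsub>presented_ab_group S R\<^esub> Y) = Abs X + Abs Y"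
  using Rep_add[of "Abs X" "Abs Y"] type_definition.Abs_inverse[OF type_definition]
    type_definition.Rep_inverse[OF type_definition] by metis

definition proj :: "('c \<Rightarrow>\<^sub>0 int) \<Rightarrow> 'v" where
  "proj z = Abs (pclass S R z)"

lemma Rep_proj: "Poly_Mapping.keys z \<subseteq> S \<Longrightarrow> Rep (proj z) = pclass S R z"
  unfolding proj_def carrier_presented_ab_group
  by (rule type_definition.Abs_inverse[OF type_definition]) (simp add: carrier_presented_ab_group)

lemma proj_add:
  "Poly_Mapping.keys x \<subseteq> S \<Longrightarrow> Poly_Mapping.keys y \<subseteq> S \<Longrightarrow> proj (x + y) = proj x + proj y"
  by (simp add: Rep_inject[symmetric] Rep_add Rep_proj pclass_mult[OF relators_in_carrier] keys_add_subset)

lemma proj_diff: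
  "Poly_Mapping.keys x \<subseteq> S \<Longrightarrow> Poly_Mapping.keys y \<subseteq> S \<Longrightarrow> proj (x - y) = proj x - proj y"
  using proj_add[of "x - y" y] by (simp add: keys_diff_subset eq_diff_eq)

lemma proj_eq_0_iff:
  "Poly_Mapping.keys x \<subseteq> S \<Longrightarrow> proj x = 0 \<longleftrightarrow> x \<in> generate (free_Abelian_group S) R"
  by (simp add: Rep_inject[symmetric] Rep_zero Rep_proj pclass_eq_one_iff[OF relators_in_carrier])

lemma proj_zero: "proj 0 = 0"
  by (simp add: proj_eq_0_iff generate.one[of "free_Abelian_group S", simplified])

lemma proj_relator:
  assumes "r \<in> R"
  shows "proj r = 0"
proof -
  have "Poly_Mapping.keys r \<subseteq> S" using assms relators_in_carrier by force
  then show ?thesis using proj_eq_0_iff generate.incl[OF assms] by simp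
qed

lemma proj_cases:
  obtains z where "Poly_Mapping.keys z \<subseteq> S" and "v = proj z"
proof -
  obtain z where "z \<in> carrier (free_Abelian_group S)" "Rep v = pclass S R z"
    using Rep_in_carrier[of v] by (auto simp: carrier_presented_ab_group)
  with that show thesis by (metis Rep_inject Rep_proj carrier_free_Abelian_group_iff)
qed

lemma additive_eqI:
  fixes f g :: "'v \<Rightarrow> 'b::ab_group_add"
  assumes "additive f" "additive g" "\<And>s. s \<in> S \<Longrightarrow> f (proj (frag_of s)) = g (proj (frag_of s))"
  shows "f v = g v"
proof -
  obtain z where "Poly_Mapping.keys z \<subseteq> S" "v = proj z" by (rule proj_cases)
  moreover have "f (proj z) = g (proj z)" if "Poly_Mapping.keys z \<subseteq> S" for z
    using that by (rule free_Abelian_group_induct[where P = "\<lambda>z. f (proj z) = g (proj z)"])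
      (simp_all add: assms proj_zero proj_diff additive.zero additive.diff)
  ultimately show ?thesis by simp
qed

lemma additive_lift:
  fixes \<Psi> :: "('c \<Rightarrow>\<^sub>0 int) \<Rightarrow> 'b::ab_group_add"
  assumes \<Psi>: "additive \<Psi>" and relators: "\<And>r. r \<in> R \<Longrightarrow> \<Psi> r = 0"
  obtains \<phi> where "additive \<phi>" and "\<And>z. Poly_Mapping.keys z \<subseteq> S \<Longrightarrow> \<phi> (proj z) = \<Psi> z"
proof
  define \<phi> where "\<phi> v = \<Psi> (SOME z. Poly_Mapping.keys z \<subseteq> S \<and> v = proj z)" for v
  show \<phi>: "\<phi> (proj z) = \<Psi> z" if "Poly_Mapping.keys z \<subseteq> S" for z
  proof -
    define z' where "z' = (SOME z'. Poly_Mapping.keys z' \<subseteq> S \<and> proj z = proj z')"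
    have z': "Poly_Mapping.keys z' \<subseteq> S" "proj z = proj z'"
      unfolding z'_def by (rule someI2[of _ z], use that in auto)+
    then have "z - z' \<in> generate (free_Abelian_group S) R"
      using that by (simp add: proj_diff flip: proj_eq_0_iff[OF keys_diff_subset])
    then have "\<Psi> (z - z') = 0"
      using additive_zero_on_generate[OF \<Psi> relators_in_carrier] relators by blast
    then show ?thesis by (simp add: \<phi>_def additive.diff[OF \<Psi>] flip: z'_def)
  qed
  show "additive \<phi>"
  proof
    fix v w
    obtain x y where "Poly_Mapping.keys x \<subseteq> S" "v = proj x" "Poly_Mapping.keys y \<subseteq> S" "w = proj y"
      by (metis proj_cases)
    then show "\<phi> (v + w) = \<phi> v + \<phi> w"
      by (simp add: \<phi> keys_add_subset additive.add[OF \<Psi>] flip: proj_add)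
  qed
qed

end

lemma iso_presented_ab_group_types:
  assumes V: "presented_ab_group_type S R RepV AbsV" and W: "presented_ab_group_type S' R' RepW AbsW"
    and \<Phi>: "additive \<Phi>" and inverse: "\<And>v. \<Psi> (\<Phi> v) = v" "\<And>w. \<Phi> (\<Psi> w) = w"
  shows "(\<lambda>X. RepW (\<Phi> (AbsV X))) \<in> iso (presented_ab_group S R) (presented_ab_group S' R')"
proof (rule isoI)
  interpret V: presented_ab_group_type S R RepV AbsV by (rule V)
  interpret W: presented_ab_group_type S' R' RepW AbsW by (rule W)
  show "(\<lambda>X. RepW (\<Phi> (AbsV X))) \<in> hom (presented_ab_group S R) (presented_ab_group S' R')"
    by (rule homI) (simp_all add: W.Rep_in_carrier V.Abs_mult additive.add[OF \<Phi>] W.Rep_add)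
  show "bij_betw (\<lambda>X. RepW (\<Phi> (AbsV X))) (carrier (presented_ab_group S R)) (carrier (presented_ab_group S' R'))"
    by (rule bij_betw_byWitness[where f' = "\<lambda>Y. RepV (\<Psi> (AbsW Y))"])
      (simp_all add: inverse image_subset_iff V.Rep_in_carrier W.Rep_in_carrier
        type_definition.Abs_inverse[OF V.type_definition] type_definition.Abs_inverse[OF W.type_definition]
        type_definition.Rep_inverse[OF V.type_definition] type_definition.Rep_inverse[OF W.type_definition])
qed

section \<open>The group V and the exterior square of \<real> over \<rat>\<close>

lemma V_rels_subset: "V_rels \<subseteq> carrier (free_Abelian_group V_gens)"
  unfolding V_rels_def by (auto simp: V_gens_def keys_add_subset keys_diff_subset keys_cmul_subset)

lemma comm_group_V_group: "comm_group V_group"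
  unfolding V_group_def by (rule comm_group_presented_ab_group[OF V_rels_subset])

lemma comm_group_Wedge2_QR: "comm_group Wedge2_QR"
  unfolding Wedge2_QR_def by (rule comm_group_presented_ab_group) (simp add: subset_eq)

typedef V = "carrier V_group" morphisms Rep_V Abs_V
proof -
  interpret comm_group V_group by (rule comm_group_V_group)
  show ?thesis by blast
qed

typedef Wedge2 = "carrier Wedge2_QR" morphisms Rep_Wedge2 Abs_Wedge2
proof -
  interpret comm_group Wedge2_QR by (rule comm_group_Wedge2_QR)
  show ?thesis by blast
qed

instantiation V :: ab_group_add
begin

definition "0 = Abs_V \<one>\<^bsub>V_group\<^esub>"
definition "x + y = Abs_V (Rep_V x \<otimes>\<^bsub>V_group\<^esub> Rep_V y)"
definition "- x = Abs_V (inv\<^bsub>V_group\<^esub> Rep_V x)"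
definition "x - y = x + - (y :: V)"

instance
proof
  interpret comm_group V_group by (rule comm_group_V_group)
  fix x y z :: V
  show "x + y + z = x + (y + z)" "x + y = y + x" "0 + x = x" "- x + x = 0" "x - y = x + - y"
    by (simp_all add: plus_V_def zero_V_def uminus_V_def minus_V_def Abs_V_inverse Rep_V_inverse
        Rep_V m_ac)
qed

end

instantiation Wedge2 :: ab_group_add
begin

definition "0 = Abs_Wedge2 \<one>\<^bsub>Wedge2_QR\<^esub>"
definition "x + y = Abs_Wedge2 (Rep_Wedge2 x \<otimes>\<^bsub>Wedge2_QR\<^esub> Rep_Wedge2 y)"
definition "- x = Abs_Wedge2 (inv\<^bsub>Wedge2_QR\<^esub> Rep_Wedge2 x)"
definition "x - y = x + - (y :: Wedge2)"

instance
proof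
  interpret comm_group Wedge2_QR by (rule comm_group_Wedge2_QR)
  fix x y z :: Wedge2
  show "x + y + z = x + (y + z)" "x + y = y + x" "0 + x = x" "- x + x = 0" "x - y = x + - y"
    by (simp_all add: plus_Wedge2_def zero_Wedge2_def uminus_Wedge2_def minus_Wedge2_def
        Abs_Wedge2_inverse Rep_Wedge2_inverse Rep_Wedge2 m_ac)
qed

end

lemma Rep_V_add: "Rep_V (x + y) = Rep_V x \<otimes>\<^bsub>V_group\<^esub> Rep_V y"
proof -
  interpret comm_group V_group by (rule comm_group_V_group)
  show ?thesis using Rep_V by (simp add: plus_V_def Abs_V_inverse)
qed

lemma Rep_Wedge2_add: "Rep_Wedge2 (x + y) = Rep_Wedge2 x \<otimes>\<^bsub>Wedge2_QR\<^esub> Rep_Wedge2 y"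
proof -
  interpret comm_group Wedge2_QR by (rule comm_group_Wedge2_QR)
  show ?thesis using Rep_Wedge2 by (simp add: plus_Wedge2_def Abs_Wedge2_inverse)
qed

interpretation V: presented_ab_group_type V_gens V_rels Rep_V Abs_V
  by (rule presented_ab_group_type.intro[OF V_rels_subset
        type_definition_V[unfolded V_group_def] Rep_V_add[unfolded V_group_def]])

interpretation Wedge2: presented_ab_group_type UNIV wedge_rels Rep_Wedge2 Abs_Wedge2
  by (rule presented_ab_group_type.intro[OF _
        type_definition_Wedge2[unfolded Wedge2_QR_def] Rep_Wedge2_add[unfolded Wedge2_QR_def]])
    (simp add: subset_eq)

definition u :: "real \<Rightarrow> real \<Rightarrow> V" where
  "u a b = Abs_V (u_gen a b)"

definition wedge2 :: "real \<Rightarrow> real \<Rightarrow> Wedge2" where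
  "wedge2 x y = Abs_Wedge2 (wedge x y)"

lemma u_eq_proj: "u a b = V.proj (frag_of (a, b))"
  by (simp add: u_def u_gen_def V.proj_def)

lemma wedge2_eq_proj: "wedge2 x y = Wedge2.proj (frag_of (x, y))"
  by (simp add: wedge2_def wedge_def Wedge2.proj_def)

lemma in_V_gens [simp]: "(a, b) \<in> V_gens \<longleftrightarrow> 0 < b \<and> b < a \<and> a \<le> 1"
  by (simp add: V_gens_def)

lemma u_add_left:
  assumes "0 < b" "b < min a a'" "a + a' \<le> 1"
  shows "u (a + a') b = u a b + u a' b"
proof -
  have "frag_of (a + a', b) - frag_of (a, b) - frag_of (a', b) \<in> V_rels"
    using assms unfolding V_rels_def by blast
  from V.proj_relator[OF this] assms have "u (a + a') b - u a b - u a' b = 0"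
    by (simp add: u_eq_proj V.proj_diff keys_diff_subset)
  then show ?thesis by (simp add: algebra_simps)
qed

lemma u_add_right:
  assumes "0 < min b b'" "b + b' < a" "a \<le> 1"
  shows "u a (b + b') = u a b + u a b'"
proof -
  have "frag_of (a, b + b') - frag_of (a, b) - frag_of (a, b') \<in> V_rels"
    using assms unfolding V_rels_def by blast
  from V.proj_relator[OF this] assms have "u a (b + b') - u a b - u a b' = 0"
    by (simp add: u_eq_proj V.proj_diff keys_diff_subset)
  then show ?thesis by (simp add: algebra_simps)
qed

lemma u_double:
  assumes "0 < b" "b < a" "a < 2 * b" "2 * b \<le> 1"
  shows "u a b + u a b + u (2 * b) a = 0"
proof -
  have "frag_cmul 2 (frag_of (a, b)) + frag_of (2 * b, a) \<in> V_rels"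
    using assms unfolding V_rels_def by blast
  from V.proj_relator[OF this]
  have "V.proj (frag_of (a, b) + frag_of (a, b) + frag_of (2 * b, a)) = 0"
    by (simp add: frag_cmul_double)
  with assms show ?thesis by (simp add: u_eq_proj V.proj_add keys_add_subset)
qed

lemma biadditive_wedge2: "biadditive wedge2"
proof (rule biadditiveI)
  fix x x' y y' :: real
  have "frag_of (x + x', y) - frag_of (x, y) - frag_of (x', y) \<in> wedge_rels"
    "frag_of (x, y + y') - frag_of (x, y) - frag_of (x, y') \<in> wedge_rels"
    unfolding wedge_rels_def by blast+
  from this[THEN Wedge2.proj_relator]
  have "wedge2 (x + x') y - wedge2 x y - wedge2 x' y = 0" "wedge2 x (y + y') - wedge2 x y - wedge2 x y' = 0"
    by (simp_all add: wedge2_eq_proj Wedge2.proj_diff)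
  then show "wedge2 (x + x') y = wedge2 x y + wedge2 x' y" "wedge2 x (y + y') = wedge2 x y + wedge2 x y'"
    by (simp_all add: algebra_simps)
qed

lemma wedge2_self: "wedge2 x x = 0"
  unfolding wedge2_eq_proj by (rule Wedge2.proj_relator) (auto simp: wedge_rels_def)

lemma V_rels_vanish:
  fixes B :: "real \<Rightarrow> real \<Rightarrow> 'a::ab_group_add"
  assumes B: "biadditive B" and alt: "\<And>x. B x x = 0"
    and \<Psi>: "additive \<Psi>" and gen: "\<And>x y. \<Psi> (frag_of (x, y)) = B x y"
    and "r \<in> V_rels"
  shows "\<Psi> r = 0"
proof -
  have triple: "\<Psi> (frag_of p - frag_of q - frag_of s) = \<Psi> (frag_of p) - \<Psi> (frag_of q) - \<Psi> (frag_of s)"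
    for p q s by (simp add: additive.diff[OF \<Psi>])
  have double: "B a b + B a b + B (2 * b) a = 0" for a b
  proof -
    have "B (2 * b) a = B b a + B b a" using biadditive_add_left[OF B, of b b a] by simp
    then show ?thesis using biadditive_antisym[OF B alt, of b a] by simp
  qed
  from \<open>r \<in> V_rels\<close> show ?thesis
    unfolding V_rels_def
    by (auto simp: triple gen biadditive_add_left[OF B] biadditive_add_right[OF B]
        frag_cmul_double additive.add[OF \<Psi>] double)
qed

lemma wedge_rels_vanish:
  fixes B :: "real \<Rightarrow> real \<Rightarrow> 'a::ab_group_add"
  assumes B: "biadditive B" and alt: "\<And>x. B x x = 0"
    and \<Psi>: "additive \<Psi>" and gen: "\<And>x y. \<Psi> (frag_of (x, y)) = B x y"
    and "r \<in> wedge_rels"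
  shows "\<Psi> r = 0"
  using \<open>r \<in> wedge_rels\<close> unfolding wedge_rels_def
proof (elim UnE CollectE exE conjE)
  fix m :: int and n :: nat and x y :: real
  let ?q = "of_rat (of_int m / of_nat n) :: real"
  assume "n \<noteq> 0"
  then have scale: "of_int (int n) * (?q * z) = of_int m * z" for z
    by (simp add: of_rat_divide)
  note cmul = additive_frag_cmul_frag_of[OF B \<Psi> gen]
  show "r = frag_cmul (int n) (frag_of (?q * x, y)) - frag_cmul m (frag_of (x, y)) \<Longrightarrow> \<Psi> r = 0"
    by (simp only: additive.diff[OF \<Psi>] cmul(1) scale diff_self)
  show "r = frag_cmul (int n) (frag_of (x, ?q * y)) - frag_cmul m (frag_of (x, y)) \<Longrightarrow> \<Psi> r = 0"
    by (simp only: additive.diff[OF \<Psi>] cmul(2) scale diff_self)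
qed (simp_all add: additive.diff[OF \<Psi>] gen alt biadditive_add_left[OF B] biadditive_add_right[OF B])

lemma alternating_biadditive_extension_of_u:
  obtains W :: "real \<Rightarrow> real \<Rightarrow> V"
  where "biadditive W" and "\<And>x. W x x = 0" and "\<And>a b. 0 < b \<Longrightarrow> b < a \<Longrightarrow> a \<le> 1 \<Longrightarrow> W a b = u a b"
proof -
  obtain W where W: "biadditive W" and W_u: "\<And>a b. 0 < b \<Longrightarrow> b < a \<Longrightarrow> a \<le> 1 \<Longrightarrow> W a b = u a b"
    using biadditive_extension_from_triangle[of u] u_add_left u_add_right by blast
  moreover have "W x x = 0" for x
  proof (rule biadditive_alternating_if_doubling_relation[OF W])
    fix a b :: real
    assume "0 < b" "b < a" "a < 2 * b" "2 * b \<le> 1"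
    then show "W a b + W a b + W (2 * b) a = 0" by (simp add: W_u u_double)
  qed
  ultimately show thesis using that by blast
qed

lemma V_universal:
  fixes B :: "real \<Rightarrow> real \<Rightarrow> 'a::ab_group_add"
  assumes "biadditive B" and "\<And>x. B x x = 0"
  obtains \<phi> :: "V \<Rightarrow> 'a"
  where "additive \<phi>" and "\<And>a b. 0 < b \<Longrightarrow> b < a \<Longrightarrow> a \<le> 1 \<Longrightarrow> \<phi> (u a b) = B a b"
proof -
  obtain \<Psi> where \<Psi>: "additive \<Psi>" and gen: "\<And>p. \<Psi> (frag_of p) = case_prod B p"
    using additive_frag_extension[of "case_prod B"] by blast
  obtain \<phi> where \<phi>: "additive \<phi>" and \<phi>_proj: "\<And>z. Poly_Mapping.keys z \<subseteq> V_gens \<Longrightarrow> \<phi> (V.proj z) = \<Psi> z"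
    by (rule V.additive_lift[OF \<Psi> V_rels_vanish[OF assms \<Psi>]]) (simp_all add: gen)
  show thesis
  proof (rule that[OF \<phi>])
    fix a b :: real
    assume "0 < b" "b < a" "a \<le> 1"
    then show "\<phi> (u a b) = B a b" by (simp add: u_eq_proj \<phi>_proj gen)
  qed
qed

lemma Wedge2_universal:
  fixes B :: "real \<Rightarrow> real \<Rightarrow> 'a::ab_group_add"
  assumes "biadditive B" and "\<And>x. B x x = 0"
  obtains \<psi> :: "Wedge2 \<Rightarrow> 'a" where "additive \<psi>" and "\<And>x y. \<psi> (wedge2 x y) = B x y"
proof -
  obtain \<Psi> where \<Psi>: "additive \<Psi>" and gen: "\<And>p. \<Psi> (frag_of p) = case_prod B p"
    using additive_frag_extension[of "case_prod B"] by blast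
  obtain \<psi> where \<psi>: "additive \<psi>" and \<psi>_proj: "\<And>z. \<psi> (Wedge2.proj z) = \<Psi> z"
    by (rule Wedge2.additive_lift[OF \<Psi> wedge_rels_vanish[OF assms \<Psi>]]) (simp_all add: gen)
  show thesis
    by (rule that[OF \<psi>]) (simp add: wedge2_eq_proj \<psi>_proj gen)
qed

lemma V_Wedge2_inverse_pair:
  obtains \<Phi> :: "V \<Rightarrow> Wedge2" and \<Psi> :: "Wedge2 \<Rightarrow> V"
  where "additive \<Phi>" and "\<And>v. \<Psi> (\<Phi> v) = v" and "\<And>w. \<Phi> (\<Psi> w) = w"
    and "\<And>a b. 0 < b \<Longrightarrow> b < a \<Longrightarrow> a \<le> 1 \<Longrightarrow> \<Phi> (u a b) = wedge2 a b"
proof -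
  obtain W where W: "biadditive W" "\<And>x. W x x = 0"
    and W_u: "\<And>a b. 0 < b \<Longrightarrow> b < a \<Longrightarrow> a \<le> 1 \<Longrightarrow> W a b = u a b"
    using alternating_biadditive_extension_of_u by blast
  obtain \<Phi> where \<Phi>: "additive \<Phi>" and \<Phi>_u: "\<And>a b. 0 < b \<Longrightarrow> b < a \<Longrightarrow> a \<le> 1 \<Longrightarrow> \<Phi> (u a b) = wedge2 a b"
    using V_universal[OF biadditive_wedge2 wedge2_self] by blast
  obtain \<Psi> where \<Psi>: "additive \<Psi>" and \<Psi>_wedge2: "\<And>x y. \<Psi> (wedge2 x y) = W x y"
    using Wedge2_universal[OF W] by blast
  have "\<Psi> (\<Phi> v) = v" for v
    by (rule V.additive_eqI[OF additive_comp[OF \<Psi> \<Phi>] additive_id])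
      (auto simp: \<Phi>_u \<Psi>_wedge2 W_u simp flip: u_eq_proj)
  moreover have \<Phi>_W: "\<Phi> (W x y) = wedge2 x y" for x y
  proof -
    have "\<Phi> (W x y) - wedge2 x y = 0"
      by (rule biadditive_zero_if_zero_on_rectangle[of _ "1/2" 1 0 "1/2",
            OF biadditive_diff[OF biadditive_comp[OF \<Phi> W(1)] biadditive_wedge2]])
        (simp_all add: W_u \<Phi>_u)
    then show ?thesis by simp
  qed
  moreover have "\<Phi> (\<Psi> w) = w" for w
    by (rule Wedge2.additive_eqI[OF additive_comp[OF \<Phi> \<Psi>] additive_id])
      (auto simp: \<Psi>_wedge2 \<Phi>_W simp flip: wedge2_eq_proj)
  ultimately show thesis using that \<Phi> \<Phi>_u by blast
qed

lemma Rep_wedge2: "Rep_Wedge2 (wedge2 x y) = wedge x y"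
  by (simp add: wedge2_eq_proj Wedge2.Rep_proj wedge_def)

theorem lemma9p1:
  shows "\<exists>h. h \<in> iso V_group Wedge2_QR \<and>
             (\<forall>a b. 0 < b \<and> b < a \<and> a \<le> 1 \<longrightarrow> h (u_gen a b) = wedge a b)"
proof -
  obtain \<Phi> \<Psi> where \<Phi>: "additive \<Phi>" and inverse: "\<And>v. \<Psi> (\<Phi> v) = v" "\<And>w. \<Phi> (\<Psi> w) = w"
    and \<Phi>_u: "\<And>a b. 0 < b \<Longrightarrow> b < a \<Longrightarrow> a \<le> 1 \<Longrightarrow> \<Phi> (u a b) = wedge2 a b"
    using V_Wedge2_inverse_pair by blast
  have "(\<lambda>X. Rep_Wedge2 (\<Phi> (Abs_V X))) \<in> iso V_group Wedge2_QR"
    unfolding V_group_def Wedge2_QR_def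
    by (rule iso_presented_ab_group_types[OF V.presented_ab_group_type_axioms
          Wedge2.presented_ab_group_type_axioms \<Phi> inverse])
  moreover have "Rep_Wedge2 (\<Phi> (Abs_V (u_gen a b))) = wedge a b" if "0 < b" "b < a" "a \<le> 1" for a b
    using that by (simp add: \<Phi>_u Rep_wedge2 flip: u_def)
  ultimately show ?thesis by blast
qed

end
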